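(* For every integer $g\ge 0$ let $\mathfrak{A}_g:=16^g\sum_{i=0}^{g}(-2)^i\binom{g}{i}C_{2g-i}$, where $C_n=\frac{1}{n+1}\binom{2n}{n}$ is the $n$-th Catalan number. Then, as formal power series in $w$, $$\sum_{g\ge 0}\mathfrak{A}_g\,w^{2g+1}=\frac{2w}{\sqrt{1+64w^2+16w\sqrt{16w^2+1}}+\sqrt{1+64w^2-16w\sqrt{16w^2+1}}}.$$
   Context: For $g\ge 3$, the number $\mathfrak{A}_g$ equals the number of odd covers $f:C\to\mathbb{P}^1$ of degree $2g+1$ (finite maps with $3g$ branch points and local monodromy a $3$-cycle at each branch point) from a general curve $C$ of genus $g$; these are called the alternating Catalan numbers. *)

theory Defs
  imports Complex_Main "HOL-Computational_Algebra.Formal_Power_Series"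
begin

definition catalan :: "nat \<Rightarrow> real" where
  "catalan n = real ((2*n) choose n) / real (n + 1)"

definition altCatalan :: "nat \<Rightarrow> real" where
  "altCatalan g = 16 ^ g * (\<Sum>i=0..g. (-2) ^ i * real (g choose i) * catalan (2*g - i))"

text \<open>Square root of a formal power series with positive constant term:
  the unique square root whose constant term is the positive real square root.\<close>
definition fps_sqrt :: "real fps \<Rightarrow> real fps" where
  "fps_sqrt a = fps_radical (\<lambda>k x. root k x) 2 a"

definition altCatalan_gf :: "real fps" where
  "altCatalan_gf = Abs_fps (\<lambda>n. if odd n then altCatalan ((n - 1) div 2) else 0)"

end

theory Submission
  imports Defs
begin

text \<open>
  Let C(t) be the Catalan series. Since (1 - 2 t C(t))^2 = 1 - 4 t, a series S with S(0) = 1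
  and S^2 = 1 + 2 x, where x(0) = 0, expands as S = 1 + sum_k C_k (-1/2)^k x^(k+1).
  The two radicands of the theorem are 1 + 2 x and 1 + 2 y, where
  x, y = 32 w^2 +- 8 w sqrt(16 w^2 + 1) are the roots of z^2 - t z - t for t = 64 w^2.
  Hence x^(k+1) - y^(k+1) = (x - y) U_(k+1)(t, -t) with the Lucas sequence
  U_(k+1)(t, -t) = sum_j binom(j, k - j) t^j, and reading off the coefficient of w^(2g)
  shows (S_1 - S_2) / (x - y) = sum_g A_g w^(2g). As S_1^2 - S_2^2 = 2 (x - y),
  multiplying by S_1 + S_2 gives the theorem.
\<close>

unbundle fps_syntax

lemma fps_sqrt_nth_0 [simp]: "fps_sqrt a $ 0 = root 2 (a $ 0)"
  by (simp add: fps_sqrt_def)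

lemma fps_sqrt_power2:
  assumes "a $ 0 > 0"
  shows "fps_sqrt a ^ 2 = a"
proof -
  have "root 2 (a $ 0) ^ 2 = a $ 0"
    using assms by simp
  then show ?thesis
    using power_radical[of a "\<lambda>k x. root k x" 1] assms
    by (simp add: fps_sqrt_def numeral_2_eq_2 del: power_Suc)
qed

lemma fps_power2_eq_imp_eq:
  fixes f g :: "'a :: {idom, ring_char_0} fps"
  assumes "f ^ 2 = g ^ 2" "f $ 0 = g $ 0" "f $ 0 \<noteq> 0"
  shows "f = g"
proof -
  have "(f - g) * (f + g) = 0"
    using assms(1) by (simp add: algebra_simps power2_eq_square)
  moreover have "f + g \<noteq> 0"
    using assms(2,3) by (intro fps_nonzeroI[of _ 0]) (simp flip: mult_2)
  ultimately show ?thesis by auto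
qed

lemma fps_mult_nth_cong:
  assumes "\<And>m. m \<le> n \<Longrightarrow> f $ m = g $ m"
  shows "(h * f) $ n = (h * g) $ n"
  unfolding fps_mult_nth using assms by (intro sum.cong) auto

lemma fps_compose_nth_eq_sum_power:
  assumes "a $ 0 = 0" "m \<le> N"
  shows "(f oo a) $ m = (\<Sum>k\<le>N. fps_const (f $ k) * a ^ k) $ m"
proof -
  have "(\<Sum>k\<le>N. fps_const (f $ k) * a ^ k) $ m = (\<Sum>k\<le>N. f $ k * (a ^ k) $ m)"
    by (simp add: fps_sum_nth)
  also have "\<dots> = (\<Sum>k=0..m. f $ k * (a ^ k) $ m)"
    using assms startsby_zero_power_prefix[OF assms(1)]
    by (intro sum.mono_neutral_right) auto
  finally show ?thesis by (simp add: fps_compose_nth)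
qed

lemma central_binomial_Suc: "Suc n * (2 * Suc n choose Suc n) = 2 * (2 * n + 1) * (2 * n choose n)"
proof -
  have symm: "Suc (2 * n) choose n = Suc (2 * n) choose Suc n"
    using binomial_symmetric[of n "Suc (2 * n)"] by (simp add: Suc_diff_le del: binomial_Suc_Suc)
  have "Suc n * (2 * Suc n choose Suc n) = 2 * (Suc n * (Suc (2 * n) choose Suc n))"
    using Suc_times_binomial[of n "Suc (2 * n)"] by (simp add: symm del: binomial_Suc_Suc)
  also have "\<dots> = 2 * (2 * n + 1) * (2 * n choose n)"
    using Suc_times_binomial[of n "2 * n"] by (simp del: binomial_Suc_Suc)
  finally show ?thesis .
qed

lemma catalan_Suc: "(n + 2) * catalan (Suc n) = 2 * (2 * n + 1) * catalan n"
proof -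
  have "real (Suc n * (2 * Suc n choose Suc n)) = real (2 * (2 * n + 1) * (2 * n choose n))"
    by (simp only: central_binomial_Suc)
  then show ?thesis
    by (simp add: catalan_def field_simps del: binomial_Suc_Suc)
qed

lemma gbinomial_half_Suc: "((1/2 :: real) gchoose Suc n) * (-4) ^ Suc n = -2 * catalan n"
proof (induction n)
  case 0
  then show ?case by (simp add: catalan_def)
next
  case (Suc n)
  define G where "G k = (1/2 :: real) gchoose k" for k
  have rec: "(n + 2) * G (Suc (Suc n)) = (- 1/2 - n) * G (Suc n)"
    using gbinomial_mult_1[of "1/2 :: real" "Suc n"] by (simp add: G_def algebra_simps)
  have "(n + 2) * (G (Suc (Suc n)) * (-4) ^ Suc (Suc n))
      = ((n + 2) * G (Suc (Suc n))) * (-4) * (-4) ^ Suc n"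
    by (simp only: power_Suc[of "-4 :: real" "Suc n"] mult_ac)
  also have "\<dots> = (2 * n + 1) * 2 * (G (Suc n) * (-4) ^ Suc n)"
    by (simp only: rec) (simp add: algebra_simps)
  also have "\<dots> = (n + 2) * (-2 * catalan (Suc n))"
    unfolding G_def Suc.IH using catalan_Suc[of n] by (simp add: algebra_simps)
  finally show ?case
    unfolding G_def by (subst (asm) mult_left_cancel) simp_all
qed

definition catalan_fps :: "real fps" where
  "catalan_fps = Abs_fps catalan"

lemma one_minus_catalan_fps_power2: "(1 - 2 * fps_X * catalan_fps) ^ 2 = 1 - 4 * fps_X"
proof -
  let ?L = "fps_const (-4 :: real) * fps_X"
  have binomial: "1 - 2 * fps_X * catalan_fps = fps_binomial (1/2) oo ?L"
  proof (rule fps_ext)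
    fix n
    have "(2 * fps_X * catalan_fps) $ Suc m = 2 * catalan m" for m
      by (simp add: catalan_fps_def numeral_fps_const mult.assoc)
    moreover have "(fps_binomial (1/2) oo ?L) $ Suc m = -2 * catalan m" for m
      unfolding fps_compose_linear using gbinomial_half_Suc[of m] by (simp add: mult.commute)
    ultimately show "(1 - 2 * fps_X * catalan_fps) $ n = (fps_binomial (1/2) oo ?L) $ n"
      by (cases n) (simp_all only: fps_compose_linear, simp_all)
  qed
  have "(fps_binomial (1/2) oo ?L) ^ 2 = fps_binomial 1 oo ?L"
    by (simp add: fps_compose_power fps_binomial_power)
  also have "\<dots> = 1 - 4 * fps_X"
    by (simp add: fps_binomial_1 fps_compose_add_distrib numeral_fps_const flip: fps_const_neg)
  finally show ?thesis
    unfolding binomial .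
qed

lemma sqrt_eq_catalan_fps_compose:
  fixes a S :: "real fps"
  assumes "a $ 0 = 0" "S ^ 2 = 1 + 2 * a" "S $ 0 = 1"
  shows "S = 1 + a * (catalan_fps oo (fps_const (-1/2) * a))"
proof -
  define b where "b = fps_const (-1/2) * a"
  have b0: "b $ 0 = 0"
    using assms(1) by (simp add: b_def)
  have two_b: "2 * b = - a"
    by (simp add: b_def numeral_fps_const mult.assoc[symmetric] fps_const_neg[symmetric]
        del: fps_const_neg)
  have "((1 - 2 * fps_X * catalan_fps) oo b) ^ 2 = (1 - 2 * fps_X * catalan_fps) ^ 2 oo b"
    by (rule fps_compose_power[OF b0])
  also have "\<dots> = (1 - 4 * fps_X) oo b"
    by (simp only: one_minus_catalan_fps_power2)
  also have "\<dots> = 1 - 2 * (2 * b)"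
    using b0 by (simp add: fps_compose_sub_distrib fps_compose_mult_distrib)
  also have "\<dots> = S ^ 2"
    by (simp add: two_b assms(2))
  finally have "S ^ 2 = ((1 - 2 * fps_X * catalan_fps) oo b) ^ 2"
    by (rule sym)
  then have "S = (1 - 2 * fps_X * catalan_fps) oo b"
    by (rule fps_power2_eq_imp_eq) (simp_all add: assms(3))
  also have "\<dots> = 1 - 2 * b * (catalan_fps oo b)"
    using b0 by (simp add: fps_compose_sub_distrib fps_compose_mult_distrib)
  also have "\<dots> = 1 + a * (catalan_fps oo b)"
    by (simp add: two_b)
  finally show ?thesis
    unfolding b_def .
qed

lemma sqrt_nth_catalan_expansion:
  fixes a S :: "real fps"
  assumes "a $ 0 = 0" "S ^ 2 = 1 + 2 * a" "S $ 0 = 1"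
  shows "S $ n = (1 + (\<Sum>k\<le>n. fps_const (catalan k * (-1/2) ^ k) * a ^ Suc k)) $ n"
proof -
  let ?b = "fps_const (-1/2) * a"
  have "(a * (catalan_fps oo ?b)) $ n
      = (a * (\<Sum>k\<le>n. fps_const (catalan_fps $ k) * ?b ^ k)) $ n"
    using assms(1) by (intro fps_mult_nth_cong fps_compose_nth_eq_sum_power) simp_all
  also have "a * (\<Sum>k\<le>n. fps_const (catalan_fps $ k) * ?b ^ k)
      = (\<Sum>k\<le>n. fps_const (catalan k * (-1/2) ^ k) * a ^ Suc k)"
    unfolding sum_distrib_left
    by (intro sum.cong) (simp_all add: catalan_fps_def power_mult_distrib mult_ac)
  finally show ?thesis
    using sqrt_eq_catalan_fps_compose[OF assms] by simp
qed

fun lucas_U :: "'a :: comm_ring_1 \<Rightarrow> 'a \<Rightarrow> nat \<Rightarrow> 'a" where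
  "lucas_U P Q 0 = 0"
| "lucas_U P Q (Suc 0) = 1"
| "lucas_U P Q (Suc (Suc n)) = P * lucas_U P Q (Suc n) - Q * lucas_U P Q n"

lemma lucas_U_mult_diff: "(x - y) * lucas_U (x + y) (x * y) n = x ^ n - y ^ n"
proof (induction "x + y" "x * y" n rule: lucas_U.induct)
  case (3 n)
  let ?U = "lucas_U (x + y) (x * y)"
  have "(x - y) * ?U (Suc (Suc n))
      = (x + y) * ((x - y) * ?U (Suc n)) - x * y * ((x - y) * ?U n)"
    by (simp add: algebra_simps)
  also have "\<dots> = (x + y) * (x ^ Suc n - y ^ Suc n) - x * y * (x ^ n - y ^ n)"
    by (simp only: 3)
  also have "\<dots> = x ^ Suc (Suc n) - y ^ Suc (Suc n)"
    by (simp add: algebra_simps)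
  finally show ?case .
qed simp_all

lemma lucas_U_minus_eq_sum:
  "lucas_U t (- t) (Suc k) = (\<Sum>j\<le>k. of_nat (j choose (k - j)) * t ^ j)"
  (is "_ = ?F k")
proof (induction k rule: induct_nat_012)
  case (ge2 k)
  have "?F (Suc (Suc k))
      = (\<Sum>j\<le>k. of_nat (Suc j choose Suc (k - j)) * t ^ Suc j) + t ^ Suc (Suc k)"
    by (subst sum.atMost_Suc_shift, subst sum.atMost_Suc) (simp add: Suc_diff_le)
  also have "\<dots> = (\<Sum>j\<le>k. of_nat (j choose Suc (k - j)) * t ^ Suc j) + t ^ Suc (Suc k)
      + (\<Sum>j\<le>k. of_nat (j choose (k - j)) * t ^ Suc j)"
    by (simp add: sum.distrib algebra_simps)
  also have "\<dots> = t * ?F (Suc k) + t * ?F k"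
    by (simp add: sum_distrib_left Suc_diff_le algebra_simps)
  finally show ?case
    using ge2 by simp
qed simp_all

lemma fps_const_X2_power_nth:
  fixes c :: "'a :: comm_ring_1"
  shows "(fps_const c * fps_X ^ 2) ^ j $ m = (if m = 2 * j then c ^ j else 0)"
proof -
  have "(fps_const c * fps_X ^ 2) ^ j = fps_const (c ^ j) * fps_X ^ (2 * j)"
    by (simp add: power_mult_distrib fps_const_power power_mult)
  then show ?thesis
    by (simp add: fps_X_power_nth)
qed

lemma lucas_U_X2_nth_even:
  "lucas_U (fps_const c * fps_X ^ 2) (- (fps_const c * fps_X ^ 2)) (Suc k) $ (2 * g)
    = (if g \<le> k then of_nat (g choose (k - g)) * c ^ g else 0)"
  by (simp add: lucas_U_minus_eq_sum fps_sum_nth fps_const_X2_power_nth if_distrib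
      cong: if_cong)

lemma lucas_U_X2_nth_odd:
  "lucas_U (fps_const c * fps_X ^ 2) (- (fps_const c * fps_X ^ 2)) (Suc k) $ Suc (2 * g) = 0"
  by (simp add: lucas_U_minus_eq_sum fps_sum_nth fps_const_X2_power_nth Suc_double_not_eq_double)

lemma neg_half_power_rescale:
  assumes "i \<le> g"
  shows "64 ^ g * (-1/2 :: real) ^ (2 * g - i) = 16 ^ g * (-2) ^ i"
proof -
  have pow4: "(-2 :: real) ^ i * (-2) ^ (2 * g - i) = 4 ^ g"
    using assms by (simp flip: power_add add: power_mult)
  have "64 ^ g * (-1/2 :: real) ^ (2 * g - i) = 16 ^ g * 4 ^ g * (-1/2) ^ (2 * g - i)"
    by (simp flip: power_mult_distrib)
  also have "\<dots> = 16 ^ g * (-2) ^ i * ((-2) * (-1/2)) ^ (2 * g - i)"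
    by (simp only: pow4 [symmetric] power_mult_distrib mult.assoc)
  also have "\<dots> = 16 ^ g * (-2) ^ i"
    by simp
  finally show ?thesis .
qed

lemma altCatalan_altdef:
  "altCatalan g = 64 ^ g * (\<Sum>k=g..2*g. catalan k * (-1/2) ^ k * (g choose (k - g)))"
proof -
  have "16 ^ g * ((-2) ^ i * real (g choose i) * catalan (2*g - i))
      = 64 ^ g * (catalan (2*g - i) * (-1/2) ^ (2*g - i) * real (g choose i))" if "i \<le> g" for i
  proof -
    have "16 ^ g * ((-2) ^ i * real (g choose i) * catalan (2*g - i))
        = (16 ^ g * (-2) ^ i) * (catalan (2*g - i) * real (g choose i))"
      by (simp only: mult_ac)
    also have "\<dots> = (64 ^ g * (-1/2) ^ (2*g - i)) * (catalan (2*g - i) * real (g choose i))"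
      by (simp only: neg_half_power_rescale[OF that])
    finally show ?thesis
      by (simp only: mult_ac)
  qed
  then have "altCatalan g
      = 64 ^ g * (\<Sum>i=0..g. catalan (2*g - i) * (-1/2) ^ (2*g - i) * (g choose i))"
    unfolding altCatalan_def sum_distrib_left by (intro sum.cong) simp_all
  also have "\<dots> = 64 ^ g * (\<Sum>k=g..2*g. catalan k * (-1/2) ^ k * (g choose (k - g)))"
    by (intro arg_cong[where f="(*) _"]
        sum.reindex_bij_witness[where i="\<lambda>k. 2*g - k" and j="\<lambda>i. 2*g - i"])
      (auto simp: binomial_symmetric[symmetric])
  finally show ?thesis .
qed

lemma catalan_lucas_U_sum_nth:
  assumes "m \<le> N"
  shows "(\<Sum>k\<le>N. fps_const (catalan k * (-1/2) ^ k)
            * lucas_U (64 * fps_X ^ 2) (- (64 * fps_X ^ 2)) (Suc k)) $ m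
       = fps_shift 1 altCatalan_gf $ m"
proof (cases "even m")
  case True
  then obtain g where m: "m = 2 * g"
    by (rule evenE)
  have "(\<Sum>k\<le>N. fps_const (catalan k * (-1/2) ^ k)
            * lucas_U (64 * fps_X ^ 2) (- (64 * fps_X ^ 2)) (Suc k)) $ m
      = (\<Sum>k\<le>N. catalan k * (-1/2) ^ k
            * (if g \<le> k then real (g choose (k - g)) * 64 ^ g else 0))"
    by (simp add: m fps_sum_nth numeral_fps_const lucas_U_X2_nth_even)
  also have "\<dots> = (\<Sum>k=g..2*g. catalan k * (-1/2) ^ k * (g choose (k - g)) * 64 ^ g)"
    using assms m by (intro sum.mono_neutral_cong_right) auto
  also have "\<dots> = altCatalan g"
    by (simp add: altCatalan_altdef sum_distrib_left mult_ac)
  finally show ?thesis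
    by (simp add: m altCatalan_gf_def)
next
  case False
  then obtain g where "m = Suc (2 * g)"
    by (metis oddE add.commute plus_1_eq_Suc)
  then show ?thesis
    by (simp add: fps_sum_nth numeral_fps_const lucas_U_X2_nth_odd altCatalan_gf_def)
qed

lemma sqrt_diff_eq_diff_mult_altCatalan_shift:
  fixes x y S T :: "real fps"
  assumes xy_sum: "x + y = 64 * fps_X ^ 2" and xy_prod: "x * y = - (64 * fps_X ^ 2)"
    and S: "S ^ 2 = 1 + 2 * x" "S $ 0 = 1" and T: "T ^ 2 = 1 + 2 * y" "T $ 0 = 1"
  shows "(x - y) * fps_shift 1 altCatalan_gf = S - T"
proof (rule fps_ext)
  fix n
  let ?t = "64 * fps_X ^ 2 :: real fps"
  let ?w = "\<lambda>k. fps_const (catalan k * (-1/2) ^ k)"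
  let ?A = "\<lambda>z. \<Sum>k\<le>n. ?w k * z ^ Suc k"
  have "x $ 0 * y $ 0 = 0" "x $ 0 + y $ 0 = 0"
    using arg_cong[OF xy_prod, of "\<lambda>f. f $ 0"] arg_cong[OF xy_sum, of "\<lambda>f. f $ 0"]
    by simp_all
  then have xy0: "x $ 0 = 0" "y $ 0 = 0"
    by auto
  have diff_pow: "x ^ Suc k - y ^ Suc k = (x - y) * lucas_U ?t (- ?t) (Suc k)" for k
    using lucas_U_mult_diff[of x y "Suc k"] by (simp only: xy_sum xy_prod)
  have "(S - T) $ n = (?A x - ?A y) $ n"
    using sqrt_nth_catalan_expansion[OF xy0(1) S, of n]
      sqrt_nth_catalan_expansion[OF xy0(2) T, of n]
    by simp
  also have "?A x - ?A y = (\<Sum>k\<le>n. ?w k * (x ^ Suc k - y ^ Suc k))"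
    by (simp only: right_diff_distrib flip: sum_subtractf)
  also have "\<dots> = (x - y) * (\<Sum>k\<le>n. ?w k * lucas_U ?t (- ?t) (Suc k))"
    by (simp only: diff_pow sum_distrib_left mult.left_commute)
  also have "((x - y) * (\<Sum>k\<le>n. ?w k * lucas_U ?t (- ?t) (Suc k))) $ n
      = ((x - y) * fps_shift 1 altCatalan_gf) $ n"
    by (intro fps_mult_nth_cong catalan_lucas_U_sum_nth)
  finally show "((x - y) * fps_shift 1 altCatalan_gf) $ n = (S - T) $ n" ..
qed

lemma altCatalan_gf_eq_div_sqrt_sum:
  fixes x y S T :: "real fps"
  assumes "x \<noteq> y" "x + y = 64 * fps_X ^ 2" "x * y = - (64 * fps_X ^ 2)"
    and S: "S ^ 2 = 1 + 2 * x" "S $ 0 = 1" and T: "T ^ 2 = 1 + 2 * y" "T $ 0 = 1"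
  shows "altCatalan_gf = 2 * fps_X / (S + T)"
proof -
  let ?E = "fps_shift 1 altCatalan_gf"
  have E: "(x - y) * ?E = S - T"
    by (rule sqrt_diff_eq_diff_mult_altCatalan_shift[OF assms(2-)])
  have "(x - y) * (?E * (S + T)) = (S - T) * (S + T)"
    by (simp only: E flip: mult.assoc)
  also have "\<dots> = S ^ 2 - T ^ 2"
    by (simp add: algebra_simps power2_eq_square)
  also have "\<dots> = (x - y) * 2"
    by (simp add: S T algebra_simps)
  finally have E_mult: "?E * (S + T) = 2"
    using assms(1) by (subst (asm) mult_left_cancel) simp_all
  have shift: "altCatalan_gf = fps_X * ?E"
  proof (rule fps_ext)
    fix n
    show "altCatalan_gf $ n = (fps_X * ?E) $ n"
      by (cases n) (simp_all add: altCatalan_gf_def)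
  qed
  have "S + T \<noteq> 0"
    using S(2) T(2) by (intro fps_nonzeroI[of _ 0]) simp
  then have "fps_X * ?E = fps_X * ?E * (S + T) / (S + T)"
    by simp
  also have "\<dots> = 2 * fps_X / (S + T)"
    by (simp only: mult.assoc E_mult) (simp only: mult.commute)
  finally have "fps_X * ?E = 2 * fps_X / (S + T)" .
  with shift show ?thesis
    by (rule trans)
qed

theorem theorem1p2:
  shows "altCatalan_gf =
    2 * fps_X /
      (fps_sqrt (1 + 64 * fps_X ^ 2 + 16 * fps_X * fps_sqrt (16 * fps_X ^ 2 + 1))
     + fps_sqrt (1 + 64 * fps_X ^ 2 - 16 * fps_X * fps_sqrt (16 * fps_X ^ 2 + 1)))"
proof -
  define r where "r = fps_sqrt (16 * fps_X ^ 2 + 1)"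
  have r: "r ^ 2 = 16 * fps_X ^ 2 + 1" "r $ 0 = 1"
    by (simp_all add: r_def fps_sqrt_power2)
  define x where "x = 32 * fps_X ^ 2 + 8 * fps_X * r"
  define y where "y = 32 * fps_X ^ 2 - 8 * fps_X * r"
  have "(x - y) $ 1 = 16"
    using r(2) by (simp add: x_def y_def numeral_fps_const)
  then have "x \<noteq> y"
    by auto
  moreover have "x + y = 64 * fps_X ^ 2"
    by (simp add: x_def y_def)
  moreover have "x * y = - (64 * fps_X ^ 2)"
  proof -
    have "x * y = (32 * fps_X ^ 2) ^ 2 - (8 * fps_X) ^ 2 * r ^ 2"
      by (simp add: x_def y_def algebra_simps power2_eq_square)
    then show ?thesis
      by (simp only: r(1)) (simp add: algebra_simps power2_eq_square)
  qed
  moreover have "fps_sqrt (1 + 64 * fps_X ^ 2 + 16 * fps_X * r) ^ 2 = 1 + 2 * x"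
    "fps_sqrt (1 + 64 * fps_X ^ 2 - 16 * fps_X * r) ^ 2 = 1 + 2 * y"
    by (simp_all add: fps_sqrt_power2 x_def y_def algebra_simps)
  ultimately show ?thesis
    unfolding r_def[symmetric] by (intro altCatalan_gf_eq_div_sqrt_sum) simp_all
qed

end
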